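(* For every tree $T=(V,E,w)$ whose cost function $w$ is down-monotonic and rounded, there exists an optimal extended strategy function for $T$ that is aligned.
   Context: $w$ is down-monotonic if there is a vertex $r$ such that $w(v)\le w(u)$ whenever $v$ lies on the path between $r$ and $u$; $w$ is rounded if each $w(u)$ equals $2^j$ for a nonnegative integer $j$. Intervals are of the form $[a,b)$ with integers $0\le a<b$, $|[a,b)|=b-a$; for $I=[a,b)$, $I'=[a',b')$ write $I>I'$ iff $a\ge b'$. An extended strategy function for $T$ is a map $f$ assigning to each vertex $u$ an interval $f(u)$ with $|f(u)|\ge w(u)$, such that for any distinct $v_1,v_2$ with $f(v_1)\cap f(v_2)\ne\emptyset$, the path between $v_1$ and $v_2$ contains a vertex $v_3$ with $f(v_3)>f(v_1)$ and $f(v_3)>f(v_2)$. It is optimal if $\sup\bigcup_{u\in V}f(u)$ is minimum among all extended strategy functions for $T$. A vertex $u$ is aligned if both endpoints of $f(u)$ are multiples of $w(u)$, and $f$ is aligned if every vertex is aligned. *)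

theory Defs
  imports Main
begin

definition walk :: "'a rel \<Rightarrow> 'a list \<Rightarrow> bool" where
  "walk E xs \<longleftrightarrow> (\<forall>i. Suc i < length xs \<longrightarrow> (xs ! i, xs ! Suc i) \<in> E)"

definition is_path :: "'a rel \<Rightarrow> 'a list \<Rightarrow> 'a \<Rightarrow> 'a \<Rightarrow> bool" where
  "is_path E xs u v \<longleftrightarrow> xs \<noteq> [] \<and> distinct xs \<and> walk E xs \<and> hd xs = u \<and> last xs = v"

definition is_tree :: "'a set \<Rightarrow> 'a rel \<Rightarrow> bool" where
  "is_tree V E \<longleftrightarrow> finite V \<and> V \<noteq> {} \<and> E \<subseteq> V \<times> V \<and> sym E \<and> (\<forall>x. (x, x) \<notin> E)
     \<and> (\<forall>u\<in>V. \<forall>v\<in>V. \<exists>xs. is_path E xs u v)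
     \<and> \<not> (\<exists>xs. 3 \<le> length xs \<and> distinct xs \<and> walk E xs \<and> (last xs, hd xs) \<in> E)"

text \<open>x lies on the path between u and v (in a tree this path is unique).\<close>
definition on_path :: "'a rel \<Rightarrow> 'a \<Rightarrow> 'a \<Rightarrow> 'a \<Rightarrow> bool" where
  "on_path E u v x \<longleftrightarrow> (\<exists>xs. is_path E xs u v \<and> x \<in> set xs)"

definition down_monotonic :: "'a set \<Rightarrow> 'a rel \<Rightarrow> ('a \<Rightarrow> nat) \<Rightarrow> bool" where
  "down_monotonic V E w \<longleftrightarrow>
     (\<exists>r\<in>V. \<forall>u\<in>V. \<forall>v\<in>V. on_path E r u v \<longrightarrow> w v \<le> w u)"

definition rounded :: "'a set \<Rightarrow> ('a \<Rightarrow> nat) \<Rightarrow> bool" where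
  "rounded V w \<longleftrightarrow> (\<forall>u\<in>V. \<exists>j::nat. w u = 2 ^ j)"

definition ival :: "nat \<times> nat \<Rightarrow> nat set" where
  "ival I = {fst I..<snd I}"

definition ival_gt :: "nat \<times> nat \<Rightarrow> nat \<times> nat \<Rightarrow> bool" where
  "ival_gt I I' \<longleftrightarrow> fst I \<ge> snd I'"

definition ext_strategy :: "'a set \<Rightarrow> 'a rel \<Rightarrow> ('a \<Rightarrow> nat) \<Rightarrow> ('a \<Rightarrow> nat \<times> nat) \<Rightarrow> bool" where
  "ext_strategy V E w f \<longleftrightarrow>
     (\<forall>u\<in>V. fst (f u) < snd (f u) \<and> snd (f u) - fst (f u) \<ge> w u)
     \<and> (\<forall>v1\<in>V. \<forall>v2\<in>V. v1 \<noteq> v2 \<and> ival (f v1) \<inter> ival (f v2) \<noteq> {} \<longrightarrow>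
          (\<exists>v3. on_path E v1 v2 v3 \<and> ival_gt (f v3) (f v1) \<and> ival_gt (f v3) (f v2)))"

text \<open>sup of the union of all intervals f(u), u in V (the largest right endpoint).\<close>
definition strat_cost :: "'a set \<Rightarrow> ('a \<Rightarrow> nat \<times> nat) \<Rightarrow> nat" where
  "strat_cost V f = Max ((\<lambda>u. snd (f u)) ` V)"

definition optimal_ext_strategy :: "'a set \<Rightarrow> 'a rel \<Rightarrow> ('a \<Rightarrow> nat) \<Rightarrow> ('a \<Rightarrow> nat \<times> nat) \<Rightarrow> bool" where
  "optimal_ext_strategy V E w f \<longleftrightarrow> ext_strategy V E w f \<and>
     (\<forall>g. ext_strategy V E w g \<longrightarrow> strat_cost V f \<le> strat_cost V g)"

definition aligned :: "'a set \<Rightarrow> ('a \<Rightarrow> nat) \<Rightarrow> ('a \<Rightarrow> nat \<times> nat) \<Rightarrow> bool" where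
  "aligned V w f \<longleftrightarrow> (\<forall>u\<in>V. w u dvd fst (f u) \<and> w u dvd snd (f u))"

end

theory Submission
  imports Defs
begin

text \<open>Take an optimal strategy \<open>f\<close> and realign it by induction on the vertex set, removing the
  vertex \<open>v\<close> whose interval starts last. Once the rest is realigned, every vertex of \<open>v\<close>'s
  component ends by \<open>fst (f v)\<close>; give \<open>v\<close> the slot of length \<open>w v\<close> aligned to \<open>w v\<close> just below
  that point, and lift the intervals of its component reaching into the slot by \<open>w v\<close>.
  Since weights are powers of two, only vertices lighter than \<open>v\<close> can reach into the slot, and by
  down-monotonicity they all lie on the root's side of \<open>v\<close>, so \<open>v\<close> never has to separate two of
  them. Every new right endpoint is bounded by an old one, so optimality is preserved.\<close>

lemma walk_Nil [simp]: "walk E []"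
  by (simp add: walk_def)

lemma walk_Cons: "walk E (x # xs) \<longleftrightarrow> walk E xs \<and> (xs \<noteq> [] \<longrightarrow> (x, hd xs) \<in> E)"
  by (cases xs) (auto simp: walk_def nth_Cons' less_Suc_eq_0_disj)

lemma walk_append:
  "walk E (xs @ ys) \<longleftrightarrow> walk E xs \<and> walk E ys \<and> (xs \<noteq> [] \<longrightarrow> ys \<noteq> [] \<longrightarrow> (last xs, hd ys) \<in> E)"
  by (induction xs) (auto simp: walk_Cons)

lemma walk_rev: "sym E \<Longrightarrow> walk E (rev xs) \<longleftrightarrow> walk E xs"
  by (induction xs) (auto simp: walk_Cons walk_append hd_rev last_rev sym_def)

lemma walk_join:
  assumes "walk E xs" "walk E ys" "xs \<noteq> []" "ys \<noteq> []" "last xs = hd ys"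
  shows "walk E (xs @ tl ys) \<and> hd (xs @ tl ys) = hd xs \<and> last (xs @ tl ys) = last ys"
  using assms by (cases ys) (auto simp: walk_append walk_Cons)

lemma walk_contains_path:
  "walk E ws \<Longrightarrow> ws \<noteq> [] \<Longrightarrow> \<exists>ps. is_path E ps (hd ws) (last ws) \<and> set ps \<subseteq> set ws"
proof (induction "length ws" arbitrary: ws rule: less_induct)
  case less
  show ?case
  proof (cases "distinct ws")
    case True then show ?thesis using less.prems by (auto simp: is_path_def)
  next
    case False
    then obtain xs ys zs y where ws: "ws = xs @ [y] @ ys @ [y] @ zs"
      using not_distinct_decomp by blast
    let ?ws = "xs @ [y] @ zs"
    have "walk E ?ws" using less.prems(1) unfolding ws by (auto simp: walk_append walk_Cons)
    moreover have "hd ?ws = hd ws" "last ?ws = last ws" using ws by (cases xs; cases zs; simp)+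
    ultimately obtain ps where "is_path E ps (hd ws) (last ws)" "set ps \<subseteq> set ?ws"
      using less.hyps[of ?ws] ws by fastforce
    moreover have "set ?ws \<subseteq> set ws" using ws by auto
    ultimately show ?thesis by blast
  qed
qed

lemma walk_subset:
  assumes "walk E xs" "E \<subseteq> V \<times> V" "xs \<noteq> []" "hd xs \<in> V"
  shows "set xs \<subseteq> V"
  using assms
proof (induction xs)
  case (Cons a xs)
  then show ?case by (cases xs) (auto simp: walk_Cons)
qed simp

lemma tree_walk_through_middle:
  assumes T: "is_tree V E" and az: "(a, z) \<in> E" and zb: "(z, b) \<in> E" and "a \<noteq> b"
    and ws: "walk E ws" "ws \<noteq> []" "hd ws = a" "last ws = b"
  shows "z \<in> set ws"
proof (rule ccontr)
  assume "z \<notin> set ws"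
  obtain qs where qs: "is_path E qs a b" "set qs \<subseteq> set ws"
    using walk_contains_path[OF ws(1,2)] ws(3,4) by blast
  with \<open>z \<notin> set ws\<close> have "z \<notin> set qs" by blast
  have "2 \<le> length qs"
    using qs \<open>a \<noteq> b\<close> by (cases qs rule: remdups_adj.cases) (auto simp: is_path_def)
  then have "3 \<le> length (z # qs) \<and> distinct (z # qs) \<and> walk E (z # qs)
      \<and> (last (z # qs), hd (z # qs)) \<in> E"
    using qs \<open>z \<notin> set qs\<close> az zb T by (auto simp: is_path_def walk_Cons is_tree_def dest: symD)
  then show False using T unfolding is_tree_def by blast
qed

lemma tree_path_in_walk:
  assumes T: "is_tree V E" and p: "is_path E ps x y" and z: "z \<in> set ps"
    and ws: "walk E ws" "ws \<noteq> []" "hd ws = x" "last ws = y"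
  shows "z \<in> set ws"
proof (rule ccontr)
  assume zn: "z \<notin> set ws"
  have symE: "sym E" using T by (simp add: is_tree_def)
  obtain as bs where ps: "ps = as @ z # bs" using z split_list by metis
  have asne: "as \<noteq> []" and bsne: "bs \<noteq> []"
    using ps p zn ws by (auto simp: is_path_def)
  have dps: "distinct ps" using p by (simp add: is_path_def)
  have wa: "walk E as" and wb: "walk E bs" and az: "(last as, z) \<in> E" and zb: "(z, hd bs) \<in> E"
    using p asne bsne unfolding ps by (auto simp: is_path_def walk_append walk_Cons)
  have "hd as = x" "last bs = y" using p asne bsne ps by (auto simp: is_path_def)
  define W where "W = (rev as @ tl ws) @ tl (rev bs)"
  have "walk E W \<and> hd W = last as \<and> last W = hd bs"
    using walk_join[of E "rev as" ws] walk_join[of E "rev as @ tl ws" "rev bs"]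
      wa wb ws asne bsne \<open>hd as = x\<close> \<open>last bs = y\<close> symE
    by (simp add: W_def walk_rev hd_rev last_rev)
  moreover have "z \<notin> set W"
    using zn dps ps by (auto simp: W_def dest: list.set_sel(2)[rotated] simp del: list.set_sel)
       (metis list.sel(2) list.set_sel(2) set_rev tl_Nil)+
  moreover have "last as \<noteq> hd bs"
  proof
    assume "last as = hd bs"
    then have "hd bs \<in> set as \<inter> set bs" using asne bsne by (metis IntI hd_in_set last_in_set)
    then show False using dps ps by (auto simp: disjoint_iff)
  qed
  ultimately show False
    using tree_walk_through_middle[OF T az zb, of W] asne by (simp add: W_def)
qed

lemma on_path_in_walk:
  "is_tree V E \<Longrightarrow> on_path E x y z \<Longrightarrow> walk E ws \<Longrightarrow> ws \<noteq> [] \<Longrightarrow> hd ws = x \<Longrightarrow> last ws = y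
    \<Longrightarrow> z \<in> set ws"
  using tree_path_in_walk by (fastforce simp: on_path_def)

lemma on_path_in_V:
  assumes "is_tree V E" "on_path E x y z" "x \<in> V"
  shows "z \<in> V"
proof -
  obtain ps where "is_path E ps x y" "z \<in> set ps" using assms(2) by (auto simp: on_path_def)
  then show ?thesis
    using walk_subset[of E ps V] assms(1,3) by (auto simp: is_path_def is_tree_def)
qed

lemma walk_avoiding:
  assumes "is_tree V E" "x \<in> V" "y \<in> V" "\<not> on_path E x y z"
  shows "\<exists>ws. walk E ws \<and> ws \<noteq> [] \<and> hd ws = x \<and> last ws = y \<and> z \<notin> set ws"
proof -
  obtain ps where "is_path E ps x y" using assms(1-3) unfolding is_tree_def by blast
  moreover have "z \<notin> set ps" using assms(4) calculation by (auto simp: on_path_def)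
  ultimately show ?thesis by (auto simp: is_path_def)
qed

lemma on_path_sym:
  assumes "is_tree V E" "on_path E x y z"
  shows "on_path E y x z"
proof -
  obtain xs where xs: "is_path E xs x y" "z \<in> set xs" using assms(2) by (auto simp: on_path_def)
  have "sym E" using assms(1) by (simp add: is_tree_def)
  then have "is_path E (rev xs) y x" using xs by (auto simp: is_path_def walk_rev hd_rev last_rev)
  then show ?thesis using xs by (auto simp: on_path_def)
qed

lemma on_path_self: "on_path E x x z \<Longrightarrow> z = x"
  unfolding on_path_def is_path_def
proof (elim exE conjE)
  fix xs assume xs: "xs \<noteq> []" "distinct xs" "hd xs = x" "last xs = x" "z \<in> set xs"
  then obtain a ys where "xs = a # ys" by (cases xs) auto
  show "z = x"
  proof (cases ys)
    case Nil then show ?thesis using xs \<open>xs = a # ys\<close> by simp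
  next
    case (Cons b zs)
    then have "last xs \<in> set ys" using \<open>xs = a # ys\<close> by simp
    then show ?thesis using xs \<open>xs = a # ys\<close> by auto
  qed
qed

lemma on_path_split:
  assumes T: "is_tree V E" and V: "x \<in> V" "y \<in> V" "r \<in> V" and p: "on_path E x y z"
  shows "on_path E x r z \<or> on_path E r y z"
proof (rule ccontr)
  assume "\<not> (on_path E x r z \<or> on_path E r y z)"
  then obtain w1 w2 where
    w1: "walk E w1" "w1 \<noteq> []" "hd w1 = x" "last w1 = r" "z \<notin> set w1" and
    w2: "walk E w2" "w2 \<noteq> []" "hd w2 = r" "last w2 = y" "z \<notin> set w2"
    using walk_avoiding[OF T V(1,3)] walk_avoiding[OF T V(3,2)] by blast
  have "z \<notin> set (w1 @ tl w2)" using w1 w2 by (cases w2) auto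
  then show False
    using on_path_in_walk[OF T p, of "w1 @ tl w2"] walk_join[of E w1 w2] w1 w2 by simp
qed

lemma on_path_trans:
  assumes T: "is_tree V E" and p: "on_path E x y z" and q: "on_path E x z t"
  shows "on_path E x y t"
proof -
  obtain ps where ps: "is_path E ps x y" "z \<in> set ps" using p by (auto simp: on_path_def)
  obtain as bs where s: "ps = as @ z # bs" using ps split_list by metis
  have "walk E (as @ [z])" using ps s by (auto simp: is_path_def walk_append walk_Cons)
  moreover have "hd (as @ [z]) = x" using ps s by (cases as) (auto simp: is_path_def)
  ultimately have "t \<in> set ps" using on_path_in_walk[OF T q, of "as @ [z]"] s by auto
  then show ?thesis using ps by (auto simp: on_path_def)
qed

text \<open>\<open>x\<close> and \<open>y\<close> lie in the same component of the subforest induced by \<open>U\<close>.\<close>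

definition joined_in :: "'a rel \<Rightarrow> 'a set \<Rightarrow> 'a \<Rightarrow> 'a \<Rightarrow> bool" where
  "joined_in E U x y \<longleftrightarrow> (\<forall>z. on_path E x y z \<longrightarrow> z \<in> U)"

lemma joined_in_mono: "U \<subseteq> U' \<Longrightarrow> joined_in E U x y \<Longrightarrow> joined_in E U' x y"
  by (auto simp: joined_in_def)

lemma joined_in_sym: "is_tree V E \<Longrightarrow> joined_in E U x y \<Longrightarrow> joined_in E U y x"
  using on_path_sym by (metis joined_in_def)

lemma joined_in_trans:
  "is_tree V E \<Longrightarrow> x \<in> V \<Longrightarrow> y \<in> V \<Longrightarrow> z \<in> V \<Longrightarrow> joined_in E U x y \<Longrightarrow> joined_in E U y z
    \<Longrightarrow> joined_in E U x z"
  unfolding joined_in_def using on_path_split by metis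

lemma joined_in_refl: "x \<in> U \<Longrightarrow> joined_in E U x x"
  using on_path_self by (metis joined_in_def)

lemma joined_in_on_path: "is_tree V E \<Longrightarrow> on_path E x y z \<Longrightarrow> joined_in E U x y \<Longrightarrow> joined_in E U x z"
  unfolding joined_in_def using on_path_trans by metis

lemma joined_in_V: "is_tree V E \<Longrightarrow> x \<in> V \<Longrightarrow> joined_in E V x y"
  unfolding joined_in_def using on_path_in_V by metis

text \<open>Separation is demanded only within components of \<open>U\<close>, which makes it inherited by subsets.\<close>

definition separating_on :: "'a rel \<Rightarrow> 'a set \<Rightarrow> ('a \<Rightarrow> nat \<times> nat) \<Rightarrow> bool" where
  "separating_on E U g \<longleftrightarrow> (\<forall>v1\<in>U. \<forall>v2\<in>U.
     v1 \<noteq> v2 \<and> ival (g v1) \<inter> ival (g v2) \<noteq> {} \<and> joined_in E U v1 v2 \<longrightarrow>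
     (\<exists>v3. on_path E v1 v2 v3 \<and> ival_gt (g v3) (g v1) \<and> ival_gt (g v3) (g v2)))"

definition tight_aligned :: "'a set \<Rightarrow> ('a \<Rightarrow> nat) \<Rightarrow> ('a \<Rightarrow> nat \<times> nat) \<Rightarrow> bool" where
  "tight_aligned U w g \<longleftrightarrow> (\<forall>u\<in>U. snd (g u) = fst (g u) + w u \<and> w u dvd fst (g u))"

definition ends_dominated :: "'a rel \<Rightarrow> 'a set \<Rightarrow> ('a \<Rightarrow> nat \<times> nat) \<Rightarrow> ('a \<Rightarrow> nat \<times> nat) \<Rightarrow> bool" where
  "ends_dominated E U g f \<longleftrightarrow> (\<forall>x\<in>U. \<exists>y\<in>U. joined_in E U x y \<and> snd (g x) \<le> snd (f y))"

lemma ival_overlap_iff: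
  "ival I \<inter> ival J \<noteq> {} \<longleftrightarrow> fst I < snd J \<and> fst J < snd I \<and> fst I < snd I \<and> fst J < snd J"
  by (auto simp: ival_def)

lemma separating_on_subset: "U' \<subseteq> U \<Longrightarrow> separating_on E U g \<Longrightarrow> separating_on E U' g"
  unfolding separating_on_def by (meson joined_in_mono subsetD)

lemma ext_strategy_iff_separating_on:
  assumes "is_tree V E"
  shows "ext_strategy V E w g \<longleftrightarrow>
    (\<forall>u\<in>V. fst (g u) < snd (g u) \<and> w u \<le> snd (g u) - fst (g u)) \<and> separating_on E V g"
  unfolding ext_strategy_def separating_on_def by (simp add: joined_in_V[OF assms])

lemma rounded_pos: "rounded V w \<Longrightarrow> a \<in> V \<Longrightarrow> 0 < w a"
  unfolding rounded_def by auto

lemma rounded_dvd_of_le: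
  assumes "rounded V w" "a \<in> V" "b \<in> V" "w a \<le> w b"
  shows "w a dvd w b"
proof -
  obtain i j where "w a = 2 ^ i" "w b = 2 ^ j" using assms(1-3) unfolding rounded_def by blast
  then show ?thesis using assms(4) by (simp add: le_imp_power_dvd)
qed

lemma dvd_le_imp_le_div_mult: "(m::nat) dvd s \<Longrightarrow> s \<le> a \<Longrightarrow> s \<le> a div m * m"
  using div_le_mono[of s a m] mult_le_mono1[of "s div m" "a div m" m] by simp

lemma dvd_less_imp_add_le: "(m::nat) dvd s \<Longrightarrow> m dvd t \<Longrightarrow> s < t \<Longrightarrow> s + m \<le> t"
proof (elim dvdE)
  fix k l assume "s < t" "s = m * k" "t = m * l"
  then have "Suc k \<le> l" by (simp add: Suc_le_eq)
  then show "s + m \<le> t" using \<open>s = m * k\<close> \<open>t = m * l\<close> mult_le_mono2[of "Suc k" l m] by simp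
qed

locale rooted_weighted_tree =
  fixes V :: "'a set" and E :: "'a rel" and w :: "'a \<Rightarrow> nat" and r :: 'a
  assumes tree: "is_tree V E" and rounded: "rounded V w" and root: "r \<in> V"
    and weight_mono: "\<And>u x. u \<in> V \<Longrightarrow> x \<in> V \<Longrightarrow> on_path E r u x \<Longrightarrow> w x \<le> w u"

locale realign_step = rooted_weighted_tree +
  fixes U :: "'a set" and f g :: "'a \<Rightarrow> nat \<times> nat" and v :: 'a
  assumes U_sub: "U \<subseteq> V" and v_in: "v \<in> U"
    and f_long: "\<And>u. u \<in> U \<Longrightarrow> fst (f u) + w u \<le> snd (f u)"
    and f_sep: "separating_on E U f"
    and v_latest: "\<And>u. u \<in> U \<Longrightarrow> fst (f u) \<le> fst (f v)"
    and g_tight: "tight_aligned (U - {v}) w g"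
    and g_sep: "separating_on E (U - {v}) g"
    and g_dom: "ends_dominated E (U - {v}) g f"
begin

definition base :: nat where
  "base = fst (f v) div w v * w v"

definition lifted :: "'a \<Rightarrow> bool" where
  "lifted x \<longleftrightarrow> x \<noteq> v \<and> joined_in E U x v \<and> base \<le> fst (g x)"

definition realigned :: "'a \<Rightarrow> nat \<times> nat" where
  "realigned x = (if x = v then (base, base + w v)
     else if lifted x then (fst (g x) + w v, snd (g x) + w v) else g x)"

lemma in_V: "x \<in> U \<Longrightarrow> x \<in> V"
  using U_sub by blast

lemma w_pos: "x \<in> U \<Longrightarrow> 0 < w x"
  using rounded_pos[OF rounded in_V] .

lemma g_exact: "x \<in> U - {v} \<Longrightarrow> snd (g x) = fst (g x) + w x \<and> w x dvd fst (g x)"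
  using g_tight by (simp add: tight_aligned_def)

lemma base_le: "base \<le> fst (f v)"
  by (simp add: base_def)

lemma f_end_le_start_v:
  assumes y: "y \<in> U" "y \<noteq> v" "joined_in E U y v"
  shows "snd (f y) \<le> fst (f v)"
proof (rule ccontr)
  assume "\<not> ?thesis"
  moreover have "fst (f v) < snd (f v)" using f_long[OF v_in] w_pos[OF v_in] by simp
  ultimately have "ival (f y) \<inter> ival (f v) \<noteq> {}"
    using v_latest[OF y(1)] f_long[OF y(1)] by (simp add: ival_overlap_iff)
  then obtain v3 where v3: "on_path E y v v3" "ival_gt (f v3) (f v)"
    using f_sep y v_in unfolding separating_on_def by blast
  have "v3 \<in> U" using v3(1) y(3) by (simp add: joined_in_def)
  then show False
    using v3(2) v_latest[of v3] \<open>fst (f v) < snd (f v)\<close> by (simp add: ival_gt_def)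
qed

lemma g_end_le_start_v:
  assumes x: "x \<in> U - {v}" "joined_in E U x v"
  shows "snd (g x) \<le> fst (f v)"
proof -
  obtain y where y: "y \<in> U - {v}" "joined_in E (U - {v}) x y" "snd (g x) \<le> snd (f y)"
    using g_dom x(1) by (auto simp: ends_dominated_def)
  have "joined_in E U y x" using joined_in_mono[OF _ joined_in_sym[OF tree y(2)]] by blast
  then have "joined_in E U y v"
    using joined_in_trans[OF tree in_V in_V in_V _ x(2)] x(1) y(1) v_in by blast
  then have "snd (f y) \<le> fst (f v)" using f_end_le_start_v y(1) by blast
  then show ?thesis using y(3) by linarith
qed

text \<open>An interval of \<open>g\<close> in the component of \<open>v\<close> that reaches past \<open>base\<close> must belong to a lighter
  vertex: a weight at least \<open>w v\<close> is a multiple of \<open>w v\<close>, so its interval ends at a multiple of \<open>w v\<close>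
  not exceeding \<open>fst (f v)\<close>, hence not exceeding \<open>base\<close>.\<close>

lemma below_base_or_lighter:
  assumes x: "x \<in> U - {v}" "joined_in E U x v"
  shows "snd (g x) \<le> base \<or> (base \<le> fst (g x) \<and> w x < w v \<and> w x dvd w v)"
proof (cases "w v \<le> w x")
  case True
  then have "w v dvd snd (g x)"
    using rounded_dvd_of_le[OF rounded] in_V v_in x(1) g_exact[OF x(1)] by auto
  then show ?thesis
    using dvd_le_imp_le_div_mult g_end_le_start_v[OF x] by (simp add: base_def)
next
  case False
  then have "w x dvd w v" using rounded_dvd_of_le[OF rounded] in_V v_in x(1) by simp
  then have "w x dvd base" by (simp add: base_def)
  then show ?thesis
    using False g_exact[OF x(1)] dvd_less_imp_add_le[of "w x" "fst (g x)" base] \<open>w x dvd w v\<close>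
    by (cases "fst (g x) < base") auto
qed

lemma lifted_lighter: "x \<in> U \<Longrightarrow> lifted x \<Longrightarrow> w x < w v \<and> w x dvd w v"
  using below_base_or_lighter[of x] g_exact[of x] w_pos[of x] by (auto simp: lifted_def)

lemma unlifted_below_base:
  "x \<in> U - {v} \<Longrightarrow> joined_in E U x v \<Longrightarrow> \<not> lifted x \<Longrightarrow> snd (g x) \<le> base"
  using below_base_or_lighter by (auto simp: lifted_def)

text \<open>Weights grow away from the root, so a lifted vertex lies on the root's side of \<open>v\<close>.\<close>

lemma lifted_not_behind_v: "x \<in> U \<Longrightarrow> lifted x \<Longrightarrow> \<not> on_path E r x v"
proof
  assume "x \<in> U" "lifted x" "on_path E r x v"
  then have "w v \<le> w x" using weight_mono in_V v_in by blast
  then show False using lifted_lighter \<open>x \<in> U\<close> \<open>lifted x\<close> by fastforce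
qed

lemma realigned_beside_v:
  assumes "x \<in> U - {v}" "joined_in E U x v"
  shows "(lifted x \<and> base + w v \<le> fst (realigned x)) \<or> (\<not> lifted x \<and> snd (realigned x) \<le> base)"
  using assms unlifted_below_base[OF assms] by (auto simp: realigned_def lifted_def)

lemma realigned_v: "realigned v = (base, base + w v)"
  by (simp add: realigned_def)

lemma realigned_tight: "tight_aligned U w realigned"
  unfolding tight_aligned_def
proof
  fix u assume u: "u \<in> U"
  consider "u = v" | "u \<noteq> v" "lifted u" | "u \<noteq> v" "\<not> lifted u" by blast
  then show "snd (realigned u) = fst (realigned u) + w u \<and> w u dvd fst (realigned u)"
  proof cases
    case 1 then show ?thesis by (simp add: realigned_def base_def)
  next
    case 2 then show ?thesis using u g_exact[of u] lifted_lighter[of u] by (simp add: realigned_def)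
  next
    case 3 then show ?thesis using u g_exact[of u] by (simp add: realigned_def)
  qed
qed

lemma realigned_dominated: "ends_dominated E U realigned f"
  unfolding ends_dominated_def
proof
  fix x assume x: "x \<in> U"
  consider "x = v" | "x \<noteq> v" "lifted x" | "x \<noteq> v" "\<not> lifted x" by blast
  then show "\<exists>y\<in>U. joined_in E U x y \<and> snd (realigned x) \<le> snd (f y)"
  proof cases
    case 1 then show ?thesis
      using v_in joined_in_refl[OF v_in] base_le f_long[OF v_in]
      by (intro bexI[of _ v]) (auto simp: realigned_v)
  next
    case 2
    then have "joined_in E U x v" by (simp add: lifted_def)
    then show ?thesis
      using 2 x v_in g_end_le_start_v[of x] f_long[OF v_in] by (auto simp: realigned_def)
  next
    case 3
    then obtain y where "y \<in> U - {v}" "joined_in E (U - {v}) x y" "snd (g x) \<le> snd (f y)"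
      using g_dom x by (auto simp: ends_dominated_def)
    then show ?thesis using 3 joined_in_mono[of "U - {v}" U] by (auto simp: realigned_def)
  qed
qed

lemma g_start_le_realigned: "x \<noteq> v \<Longrightarrow> fst (g x) \<le> fst (realigned x)"
  by (simp add: realigned_def)

lemma realigned_disjoint_v:
  "x \<in> U - {v} \<Longrightarrow> joined_in E U x v \<Longrightarrow> ival (realigned x) \<inter> ival (realigned v) = {}"
  using realigned_beside_v[of x] ival_overlap_iff[of "realigned x" "realigned v"]
  by (auto simp: realigned_v)

lemma realigned_separated_through_v:
  assumes v12: "v1 \<in> U - {v}" "v2 \<in> U - {v}"
    and ov: "ival (realigned v1) \<inter> ival (realigned v2) \<noteq> {}"
    and j: "joined_in E U v1 v2" and p: "on_path E v1 v2 v"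
  shows "ival_gt (realigned v) (realigned v1) \<and> ival_gt (realigned v) (realigned v2)"
proof -
  have j1: "joined_in E U v1 v" using joined_in_on_path[OF tree p j] .
  have j2: "joined_in E U v2 v"
    using joined_in_on_path[OF tree on_path_sym[OF tree p] joined_in_sym[OF tree j]] .
  have "\<not> (lifted v1 \<and> lifted v2)"
  proof
    assume "lifted v1 \<and> lifted v2"
    then have "\<not> on_path E r v1 v" "\<not> on_path E r v2 v" using lifted_not_behind_v v12 by auto
    moreover have "on_path E v1 r v \<or> on_path E r v2 v"
      using on_path_split[OF tree _ _ root p] in_V v12 by blast
    ultimately show False using on_path_sym[OF tree] by blast
  qed
  then have "snd (realigned v1) \<le> base \<and> snd (realigned v2) \<le> base"
    using realigned_beside_v[OF v12(1) j1] realigned_beside_v[OF v12(2) j2] ov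
    by (auto simp: ival_overlap_iff)
  then show ?thesis by (simp add: realigned_def ival_gt_def)
qed

lemma realigned_separated_avoiding_v:
  assumes v12: "v1 \<in> U - {v}" "v2 \<in> U - {v}" "v1 \<noteq> v2"
    and ov: "ival (realigned v1) \<inter> ival (realigned v2) \<noteq> {}"
    and j: "joined_in E U v1 v2" and p: "\<not> on_path E v1 v2 v"
  shows "\<exists>v3. on_path E v1 v2 v3 \<and> ival_gt (realigned v3) (realigned v1)
    \<and> ival_gt (realigned v3) (realigned v2)"
proof -
  have j': "joined_in E (U - {v}) v1 v2" using j p by (auto simp: joined_in_def)
  show ?thesis
  proof (cases "lifted v1 \<or> lifted v2")
    case True
    have "joined_in E U v1 v \<or> joined_in E U v2 v" using True by (auto simp: lifted_def)
    then have j1: "joined_in E U v1 v" and j2: "joined_in E U v2 v"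
      using joined_in_trans[OF tree _ _ v_in[THEN in_V]] j joined_in_sym[OF tree j] in_V v12
      by (meson DiffD1)+
    have "fst (realigned v1) < snd (realigned v2)" "fst (realigned v2) < snd (realigned v1)"
      using ov by (simp_all add: ival_overlap_iff)
    then have lifted: "lifted v1" "lifted v2"
      using realigned_beside_v[OF v12(1) j1] realigned_beside_v[OF v12(2) j2] True by auto
    then have "ival (g v1) \<inter> ival (g v2) \<noteq> {}"
      using ov by (simp add: realigned_def lifted_def ival_overlap_iff)
    then obtain v3 where v3: "on_path E v1 v2 v3" "ival_gt (g v3) (g v1)" "ival_gt (g v3) (g v2)"
      using g_sep v12 j' unfolding separating_on_def by blast
    have v3U: "v3 \<in> U - {v}" using j' v3(1) by (simp add: joined_in_def)
    have "joined_in E U v3 v"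
      using joined_in_trans[OF tree _ _ _ joined_in_sym[OF tree joined_in_on_path[OF tree v3(1) j]]]
        j1 in_V v3U v12 v_in by blast
    moreover have "base \<le> fst (g v3)"
      using lifted v3(2) g_exact[OF v12(1)] by (simp add: lifted_def ival_gt_def)
    ultimately have "lifted v3" using v3U by (simp add: lifted_def)
    then show ?thesis using v3 v3U lifted v12 by (intro exI[of _ v3]) (simp add: realigned_def ival_gt_def)
  next
    case False
    then have "ival (g v1) \<inter> ival (g v2) \<noteq> {}" using ov v12 by (simp add: realigned_def)
    then obtain v3 where v3: "on_path E v1 v2 v3" "ival_gt (g v3) (g v1)" "ival_gt (g v3) (g v2)"
      using g_sep v12 j' unfolding separating_on_def by blast
    have "v3 \<noteq> v" using j' v3(1) by (auto simp: joined_in_def)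
    then show ?thesis
      using v3 False v12 g_start_le_realigned[of v3] by (intro exI[of _ v3]) (auto simp: realigned_def ival_gt_def)
  qed
qed

lemma realigned_separating: "separating_on E U realigned"
  unfolding separating_on_def
proof (intro ballI impI, elim conjE)
  fix v1 v2 assume v12: "v1 \<in> U" "v2 \<in> U" "v1 \<noteq> v2"
    and ov: "ival (realigned v1) \<inter> ival (realigned v2) \<noteq> {}" and j: "joined_in E U v1 v2"
  have "v1 \<noteq> v" using realigned_disjoint_v[of v2] v12 ov j joined_in_sym[OF tree j] by blast
  moreover have "v2 \<noteq> v" using realigned_disjoint_v[of v1] v12 ov j by blast
  ultimately show "\<exists>v3. on_path E v1 v2 v3 \<and> ival_gt (realigned v3) (realigned v1)
    \<and> ival_gt (realigned v3) (realigned v2)"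
    using realigned_separated_through_v realigned_separated_avoiding_v v12 ov j by blast
qed

end

lemma (in rooted_weighted_tree) tight_aligned_refinement:
  assumes "finite U" "U \<subseteq> V" "\<And>u. u \<in> U \<Longrightarrow> fst (f u) + w u \<le> snd (f u)" "separating_on E U f"
  shows "\<exists>g. tight_aligned U w g \<and> separating_on E U g \<and> ends_dominated E U g f"
  using assms
proof (induction U rule: finite_psubset_induct)
  case (psubset U)
  show ?case
  proof (cases "U = {}")
    case True
    then show ?thesis by (simp add: tight_aligned_def separating_on_def ends_dominated_def)
  next
    case False
    let ?starts = "(\<lambda>u. fst (f u)) ` U"
    have "Max ?starts \<in> ?starts" using psubset.hyps False by simp
    then obtain v where "v \<in> U" "fst (f v) = Max ?starts" by auto
    then have v: "v \<in> U" "\<And>u. u \<in> U \<Longrightarrow> fst (f u) \<le> fst (f v)"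
      using psubset.hyps by auto
    obtain g where "tight_aligned (U - {v}) w g" "separating_on E (U - {v}) g"
      "ends_dominated E (U - {v}) g f"
      using psubset.IH[of "U - {v}"] psubset.prems separating_on_subset[of "U - {v}" U] v(1) by blast
    then interpret realign_step V E w r U f g v
      using psubset.prems v by unfold_locales auto
    show ?thesis using realigned_tight realigned_separating realigned_dominated by blast
  qed
qed

lemma ext_strategy_exists:
  assumes "finite V"
  shows "\<exists>h. ext_strategy V E w h"
proof -
  obtain idx :: "'a \<Rightarrow> nat" where idx: "inj_on idx V"
    using finite_imp_inj_to_nat_seg[OF assms] by blast
  define K where "K = (\<Sum>u\<in>V. w u) + 1"
  define h where "h u = (idx u * K, idx u * K + K)" for u
  have "w u < K" if "u \<in> V" for u
    using member_le_sum[of u V w] assms that by (simp add: K_def)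
  moreover have "ival (h v1) \<inter> ival (h v2) = {}" if "v1 \<in> V" "v2 \<in> V" "v1 \<noteq> v2" for v1 v2
  proof -
    have "idx v1 \<noteq> idx v2" using idx that by (meson inj_onD)
    then have "idx v1 + 1 \<le> idx v2 \<or> idx v2 + 1 \<le> idx v1" by linarith
    then have "(idx v1 + 1) * K \<le> idx v2 * K \<or> (idx v2 + 1) * K \<le> idx v1 * K"
      using mult_le_mono1 by blast
    then show ?thesis by (auto simp: ival_def h_def)
  qed
  moreover have "0 < K" by (simp add: K_def)
  ultimately have "ext_strategy V E w h" by (auto simp: ext_strategy_def h_def less_imp_le)
  then show ?thesis by blast
qed

lemma optimal_ext_strategy_exists:
  assumes "finite V"
  shows "\<exists>f. optimal_ext_strategy V E w f"
proof -
  obtain h where "ext_strategy V E w h" using ext_strategy_exists[OF assms] by blast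
  then show ?thesis
    using ex_has_least_nat[of "ext_strategy V E w" h "strat_cost V"]
    by (auto simp: optimal_ext_strategy_def)
qed

lemma strat_cost_le_if_dominated:
  assumes "finite V" "V \<noteq> {}" "\<And>x. x \<in> V \<Longrightarrow> \<exists>y\<in>V. snd (g x) \<le> snd (f y)"
  shows "strat_cost V g \<le> strat_cost V f"
  unfolding strat_cost_def
proof (rule Max.boundedI)
  fix c assume "c \<in> (\<lambda>u. snd (g u)) ` V"
  then obtain x y where "x \<in> V" "y \<in> V" "c = snd (g x)" "snd (g x) \<le> snd (f y)"
    using assms(3) by blast
  moreover have "snd (f y) \<le> Max ((\<lambda>u. snd (f u)) ` V)"
    using assms(1) \<open>y \<in> V\<close> by (intro Max_ge) auto
  ultimately show "c \<le> Max ((\<lambda>u. snd (f u)) ` V)" by linarith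
qed (use assms in auto)

theorem mainTheorem17:
  fixes V :: "'a set" and E :: "'a rel" and w :: "'a \<Rightarrow> nat"
  assumes "is_tree V E" and "down_monotonic V E w" and "rounded V w"
  shows "\<exists>f. optimal_ext_strategy V E w f \<and> aligned V w f"
proof -
  obtain r where "r \<in> V" "\<forall>u\<in>V. \<forall>x\<in>V. on_path E r u x \<longrightarrow> w x \<le> w u"
    using assms(2) unfolding down_monotonic_def by blast
  then interpret rooted_weighted_tree V E w r
    using assms(1,3) by unfold_locales auto
  have V: "finite V" "V \<noteq> {}" using tree by (auto simp: is_tree_def)
  obtain f where f: "optimal_ext_strategy V E w f"
    using optimal_ext_strategy_exists[OF V(1)] by blast
  then have "\<And>u. u \<in> V \<Longrightarrow> fst (f u) + w u \<le> snd (f u)" "separating_on E V f"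
    using ext_strategy_iff_separating_on[OF tree] by (auto simp: optimal_ext_strategy_def)
  then obtain g where g: "tight_aligned V w g" "separating_on E V g" "ends_dominated E V g f"
    using tight_aligned_refinement[OF V(1) order_refl] by blast
  have "ext_strategy V E w g"
    using g(1,2) rounded_pos[OF rounded] ext_strategy_iff_separating_on[OF tree]
    by (auto simp: tight_aligned_def)
  moreover have "strat_cost V g \<le> strat_cost V f"
    using strat_cost_le_if_dominated[OF V, of g f] g(3) by (meson ends_dominated_def)
  ultimately have "optimal_ext_strategy V E w g"
    using f by (auto simp: optimal_ext_strategy_def)
  moreover have "aligned V w g" using g(1) by (simp add: tight_aligned_def aligned_def)
  ultimately show ?thesis by blast
qed

end
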